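(* Let $\mathcal T\subset\binom{[n]}{3}$ be an intersecting family with $\tau(\mathcal T)=3$. Then $\gamma_1(\mathcal T)\leq 5$, with equality if and only if $\mathcal T$ is isomorphic to $\mathcal T_0$.
   Context: A family is intersecting if any two members intersect. $\tau(\mathcal T)$ is the minimum size of a set meeting every member of $\mathcal T$. $\gamma_1(\mathcal T)=\min_{x\in[n]}|\{T\in\mathcal T: x\notin T\}|$. $\mathcal T_0\subset\binom{[6]}{3}$ is $\{\{1,2,3\},\{1,2,4\},\{3,4,5\},\{3,4,6\},\{1,5,6\},\{2,5,6\},\{1,3,5\},\{2,4,5\},\{1,4,6\},\{2,3,6\}\}$. Isomorphic means equal up to an injective relabeling of vertices. *)

theory Defs
  imports Main
begin

definition intersecting :: "'a set set \<Rightarrow> bool" where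
  "intersecting F \<longleftrightarrow> (\<forall>A\<in>F. \<forall>B\<in>F. A \<inter> B \<noteq> {})"

definition tau :: "'a set set \<Rightarrow> nat" where
  "tau F = (LEAST k. \<exists>S. finite S \<and> card S = k \<and> (\<forall>A\<in>F. S \<inter> A \<noteq> {}))"

definition gamma1 :: "nat \<Rightarrow> nat set set \<Rightarrow> nat" where
  "gamma1 n F = Min ((\<lambda>x. card {A\<in>F. x \<notin> A}) ` {1..n})"

definition T0 :: "nat set set" where
  "T0 = {{1,2,3},{1,2,4},{3,4,5},{3,4,6},{1,5,6},{2,5,6},{1,3,5},{2,4,5},{1,4,6},{2,3,6}}"

definition isomorphic :: "'a set set \<Rightarrow> 'b set set \<Rightarrow> bool" where
  "isomorphic F G \<longleftrightarrow> (\<exists>f. inj_on f (\<Union>F) \<and> (\<lambda>A. f ` A) ` F = G)"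

end

theory Submission
  imports Defs
begin

text \<open>
  Fix a member E = {a, b, c}. Every other member either meets E in a single vertex u, and is then
  u together with an edge of the private link G u = {e. u + e \<in> T, e \<inter> E = {}}, or it is
  (E - {u}) + w with w in the exchange set P u. Since \<tau> = 3 every pair of vertices is avoided by
  some member; this forces each P u to lie in every edge of G u, edges of different links to meet,
  and no link to contain a star of three edges. The members avoiding a are covered by G b, G c and
  P a. If every vertex is avoided by at least five members, this count also rules out two disjoint
  edges and a triangle in a link, so |G u| \<le> 2 and |G u| + |P u| \<le> 3; summing the three counts
  forces |G u| = 2 and P u = {w_u}, with w_a, w_b, w_c distinct, and then G a = {w_a w_b, w_a w_c}
  and symmetrically, which is exactly the family T0 on {a, b, c, w_a, w_b, w_c}. Conversely every
  vertex of T0 is avoided by exactly five members.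
\<close>

lemma card_2_obtain_other:
  assumes "card e = 2" "x \<in> e"
  obtains y where "e = {x, y}" "y \<noteq> x"
proof -
  obtain u v where "e = {u, v}" "u \<noteq> v"
    using assms(1) card_2_iff by metis
  with assms(2) that show thesis by auto
qed

lemma card_2_eq_if_mem:
  assumes "card e = 2" "x \<in> e" "y \<in> e" "x \<noteq> y"
  shows "e = {x, y}"
proof -
  obtain z where "e = {x, z}" using assms(1,2) by (rule card_2_obtain_other)
  with assms(3,4) show ?thesis by auto
qed

lemma card_ge_2_obtain:
  assumes "2 \<le> card S"
  obtains x y where "x \<in> S" "y \<in> S" "x \<noteq> y"
proof -
  obtain S' where "S' \<subseteq> S" "card S' = 2" using obtain_subset_with_card_n[OF assms] by metis
  with that show thesis by (auto simp: card_2_iff)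
qed

lemma card_insert_le_Suc: "card (insert x A) \<le> Suc (card A)"
  by (cases "finite A") (simp_all add: card_insert_if)

lemma card_Int_le_1_if_card_2:
  assumes "card e = 2" "card f = 2" "e \<noteq> f"
  shows "card (e \<inter> f) \<le> 1"
proof -
  have "finite e" using assms(1) by (metis card.infinite zero_neq_numeral)
  have "\<not> e \<subseteq> f"
    using assms card_subset_eq[of f e] by (metis card.infinite zero_neq_numeral)
  then have "e \<inter> f \<subset> e" by blast
  then have "card (e \<inter> f) < card e" using \<open>finite e\<close> by (intro psubset_card_mono)
  with assms(1) show ?thesis by simp
qed

lemma card_add_le_by_injection:
  assumes "finite K" "Y \<subseteq> K" "inj_on h X" "h ` X \<subseteq> K" "\<And>x. x \<in> X \<Longrightarrow> h x \<notin> Y"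
  shows "card X + card Y \<le> card K"
proof -
  have "card X + card Y = card (h ` X \<union> Y)"
    using assms finite_subset by (subst card_Un_disjoint) (auto simp: card_image)
  also have "\<dots> \<le> card K"
    using assms by (intro card_mono) auto
  finally show ?thesis .
qed

lemma intersecting_pairs_star_or_triangle:
  assumes "card e1 = 2" "card e2 = 2" "card e3 = 2" "e1 \<noteq> e2" "e1 \<noteq> e3" "e2 \<noteq> e3"
    and "e1 \<inter> e2 \<noteq> {}" "e1 \<inter> e3 \<noteq> {}" "e2 \<inter> e3 \<noteq> {}"
  shows "(\<exists>p. p \<in> e1 \<and> p \<in> e2 \<and> p \<in> e3) \<or>
    (\<exists>p q r. p \<noteq> q \<and> q \<noteq> r \<and> p \<noteq> r \<and> {e1, e2, e3} = {{p, q}, {q, r}, {p, r}})"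
proof (cases "e1 \<inter> e2 \<inter> e3 = {}")
  case True
  obtain q where q: "q \<in> e1" "q \<in> e2" using assms(7) by blast
  obtain p where p: "e1 = {q, p}" "p \<noteq> q" using assms(1) q(1) by (rule card_2_obtain_other)
  obtain r where r: "e2 = {q, r}" "r \<noteq> q" using assms(2) q(2) by (rule card_2_obtain_other)
  have "q \<notin> e3" "p \<noteq> r" using True q p r assms(4) by auto
  then have "p \<in> e3" "r \<in> e3" using assms(8,9) p r by auto
  then have "e3 = {p, r}" using assms(3) \<open>p \<noteq> r\<close> by (intro card_2_eq_if_mem)
  then have "{e1, e2, e3} = {{p, q}, {q, r}, {p, r}}" using p(1) r(1) by auto
  then show ?thesis using p r \<open>p \<noteq> r\<close> by blast
qed blast

lemma card_le_2_if_no_star_no_triangle: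
  assumes pairs: "\<And>e. e \<in> S \<Longrightarrow> card e = 2"
    and meet: "\<And>e f. e \<in> S \<Longrightarrow> f \<in> S \<Longrightarrow> e \<inter> f \<noteq> {}"
    and no_star: "\<And>e1 e2 e3 p. {e1, e2, e3} \<subseteq> S \<Longrightarrow> e1 \<noteq> e2 \<Longrightarrow> e1 \<noteq> e3 \<Longrightarrow> e2 \<noteq> e3 \<Longrightarrow>
      p \<in> e1 \<Longrightarrow> p \<in> e2 \<Longrightarrow> p \<in> e3 \<Longrightarrow> False"
    and no_triangle: "\<And>p q r. p \<noteq> q \<Longrightarrow> q \<noteq> r \<Longrightarrow> p \<noteq> r \<Longrightarrow>
      {{p, q}, {q, r}, {p, r}} \<subseteq> S \<Longrightarrow> False"
  shows "card S \<le> 2"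
proof (rule ccontr)
  assume "\<not> card S \<le> 2"
  then obtain S' where "S' \<subseteq> S" "card S' = 3"
    using obtain_subset_with_card_n[of 3 S] by auto
  then obtain e1 e2 e3 where e: "{e1, e2, e3} \<subseteq> S" "e1 \<noteq> e2" "e1 \<noteq> e3" "e2 \<noteq> e3"
    using card_3_iff[of S'] by auto
  then have S: "e1 \<in> S" "e2 \<in> S" "e3 \<in> S" by auto
  from intersecting_pairs_star_or_triangle[OF pairs[OF S(1)] pairs[OF S(2)] pairs[OF S(3)] e(2-4)
      meet[OF S(1,2)] meet[OF S(1,3)] meet[OF S(2,3)]]
  show False
  proof (elim disjE exE conjE)
    fix p assume "p \<in> e1" "p \<in> e2" "p \<in> e3"
    then show False using no_star e by blast
  next
    fix p q r assume "p \<noteq> q" "q \<noteq> r" "p \<noteq> r" "{e1, e2, e3} = {{p, q}, {q, r}, {p, r}}"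
    then show False using no_triangle e(1) by metis
  qed
qed

lemma pair_meeting_star_contains_centre:
  assumes "card g = 2" "q1 \<noteq> q2" "q1 \<noteq> q3" "q2 \<noteq> q3"
    and "g \<inter> {p, q1} \<noteq> {}" "g \<inter> {p, q2} \<noteq> {}" "g \<inter> {p, q3} \<noteq> {}"
  shows "p \<in> g"
proof (rule ccontr)
  assume "p \<notin> g"
  then have "{q1, q2, q3} \<subseteq> g" using assms(5-7) by auto
  then have "card {q1, q2, q3} \<le> card g"
    using assms(1) by (intro card_mono) (auto intro: card_ge_0_finite)
  with assms(1-4) show False by simp
qed

lemma pair_meeting_triangle:
  assumes "card g = 2" "p \<noteq> q" "q \<noteq> r" "p \<noteq> r"
    and "g \<inter> {p, q} \<noteq> {}" "g \<inter> {q, r} \<noteq> {}" "g \<inter> {p, r} \<noteq> {}"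
  shows "g \<in> {{p, q}, {q, r}, {p, r}}"
proof (cases "q \<in> g")
  case True
  obtain z where z: "g = {q, z}" "z \<noteq> q" using assms(1) True by (rule card_2_obtain_other)
  then have "z = p \<or> z = r" using assms(2-4,7) by auto
  then show ?thesis using z by auto
next
  case False
  then have "p \<in> g" "r \<in> g" using assms(5,6) by auto
  then have "g = {p, r}" using assms(1,4) by (intro card_2_eq_if_mem)
  then show ?thesis by simp
qed

lemma pair_meeting_disjoint_pairs:
  assumes "card g = 2" "g \<inter> e \<noteq> {}" "g \<inter> f \<noteq> {}" "e \<inter> f = {}"
  shows "\<exists>u\<in>e. \<exists>v\<in>f. g = {u, v}"
proof -
  obtain u v where "u \<in> g" "u \<in> e" "v \<in> g" "v \<in> f" using assms(2,3) by blast
  moreover have "u \<noteq> v" using calculation assms(4) by blast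
  ultimately show ?thesis
    using assms(1) card_2_eq_if_mem by metis
qed

lemma triangle_eq_image:
  assumes "p \<noteq> q" "q \<noteq> r" "p \<noteq> r"
  shows "{{p, q}, {q, r}, {p, r}} = (\<lambda>v. {p, q, r} - {v}) ` {p, q, r}"
  using assms by auto

lemma cherries_meeting:
  assumes "w \<noteq> w'" "r1 \<noteq> r2" "s1 \<noteq> s2"
    and "{w, r1} \<inter> {w', s1} \<noteq> {}" "{w, r1} \<inter> {w', s2} \<noteq> {}"
    and "{w, r2} \<inter> {w', s1} \<noteq> {}" "{w, r2} \<inter> {w', s2} \<noteq> {}"
  shows "w' = r1 \<or> w' = r2"
  using assms by blast

definition avoiding :: "'a set set \<Rightarrow> 'a \<Rightarrow> 'a set set" where
  "avoiding T v = {A \<in> T. v \<notin> A}"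

definition private_link :: "'a set set \<Rightarrow> 'a set \<Rightarrow> 'a \<Rightarrow> 'a set set" where
  "private_link T E u = {e. insert u e \<in> T \<and> e \<inter> E = {}}"

definition exchanges :: "'a set set \<Rightarrow> 'a set \<Rightarrow> 'a \<Rightarrow> 'a set" where
  "exchanges T E u = {w. w \<notin> E \<and> insert w (E - {u}) \<in> T}"

lemma T0_avoiding: "\<forall>i\<in>{1..6}. card (avoiding T0 i) = 5"
  unfolding avoiding_def T0_def by code_simp

lemma card_T0: "card T0 = 10"
  unfolding T0_def by code_simp

lemma vertices_T0: "\<Union>T0 = {1..6}"
  unfolding T0_def by code_simp

lemma isomorphic_T0_explicit:
  assumes "distinct [a, b, c, wa, wb, wc]"
  shows "isomorphic T0 {{a, b, c}, {a, b, wc}, {c, wc, wb}, {c, wc, wa}, {a, wb, wa},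
    {b, wb, wa}, {a, c, wb}, {b, wc, wb}, {a, wc, wa}, {b, c, wa}}"
proof -
  define f :: "nat \<Rightarrow> 'a" where
    "f i = (if i = 1 then a else if i = 2 then b else if i = 3 then c
      else if i = 4 then wc else if i = 5 then wb else wa)" for i
  have f: "f (Suc 0) = a" "f 2 = b" "f 3 = c" "f 4 = wc" "f 5 = wb" "f 6 = wa"
    by (simp_all add: f_def)
  have "{1..6::nat} = {1, 2, 3, 4, 5, 6}" by auto
  then have "inj_on f (\<Union>T0)" using assms by (auto simp: T0_def f)
  moreover have "(\<lambda>A. f ` A) ` T0 = {{a, b, c}, {a, b, wc}, {c, wc, wb}, {c, wc, wa}, {a, wb, wa},
      {b, wb, wa}, {a, c, wb}, {b, wc, wb}, {a, wc, wa}, {b, c, wa}}"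
    by (simp add: T0_def f)
  ultimately show ?thesis unfolding isomorphic_def by blast
qed

lemma isomorphic_T0_avoiding:
  fixes T :: "'a set set"
  assumes "isomorphic T0 T"
  shows "5 \<le> card (avoiding T v)" "\<exists>v\<in>\<Union>T. card (avoiding T v) = 5"
proof -
  obtain f where f: "inj_on f {1..6}" "T = (\<lambda>A. f ` A) ` T0"
    using assms vertices_T0 unfolding isomorphic_def by auto
  have sub: "B \<subseteq> {1..6}" if "B \<in> T0" for B using that vertices_T0 by blast
  have inj: "inj_on (\<lambda>A. f ` A) T0"
    by (rule inj_on_subset[OF inj_on_image_Pow[OF f(1)]]) (use sub in blast)
  have card_avoiding: "card (avoiding T v) = card {B \<in> T0. v \<notin> f ` B}" for v
  proof -
    have "avoiding T v = (\<lambda>A. f ` A) ` {B \<in> T0. v \<notin> f ` B}"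
      using f(2) by (auto simp: avoiding_def)
    moreover have "inj_on (\<lambda>A. f ` A) {B \<in> T0. v \<notin> f ` B}"
      using inj inj_on_subset by fastforce
    ultimately show ?thesis by (simp add: card_image)
  qed
  have avoiding_image: "card (avoiding T (f i)) = 5" if i: "i \<in> {1..6}" for i
  proof -
    have "{B \<in> T0. f i \<notin> f ` B} = avoiding T0 i"
      using inj_on_image_mem_iff[OF f(1) i] sub unfolding avoiding_def by blast
    moreover have "card (avoiding T0 i) = 5" using T0_avoiding i by blast
    ultimately show ?thesis using card_avoiding[of "f i"] by simp
  qed
  show "5 \<le> card (avoiding T v)"
  proof (cases "v \<in> f ` {1..6}")
    case False
    then have "{B \<in> T0. v \<notin> f ` B} = T0" using sub by blast
    then show ?thesis using card_avoiding card_T0 by simp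
  qed (use avoiding_image in auto)
  have "f 1 \<in> \<Union>T" using f(2) unfolding T0_def by blast
  then show "\<exists>v\<in>\<Union>T. card (avoiding T v) = 5" using avoiding_image[of 1] by auto
qed

locale tau3_triple_system =
  fixes T :: "'a set set"
  assumes finite_family: "finite T"
    and card_member: "A \<in> T \<Longrightarrow> card A = 3"
    and intersecting: "intersecting T"
    and pair_avoided: "\<exists>A\<in>T. x \<notin> A \<and> y \<notin> A" \<comment> \<open>no two vertices cover T, i.e. \<tau> T \<ge> 3\<close>
begin

lemma finite_member: "A \<in> T \<Longrightarrow> finite A"
  using card_member by (metis card.infinite zero_neq_numeral)

lemma members_meet: "A \<in> T \<Longrightarrow> B \<in> T \<Longrightarrow> A \<inter> B \<noteq> {}"
  using intersecting by (simp add: intersecting_def)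

lemma finite_vertices: "finite (\<Union>T)"
  using finite_family finite_member by blast

end

locale tau3_edge = tau3_triple_system +
  fixes E :: "'a set" and a b c :: 'a
  assumes edge: "E \<in> T"
    and E_eq: "E = {a, b, c}"
    and distinct_abc: "a \<noteq> b" "a \<noteq> c" "b \<noteq> c"
begin

abbreviation G :: "'a \<Rightarrow> 'a set set" where
  "G \<equiv> private_link T E"

abbreviation P :: "'a \<Rightarrow> 'a set" where
  "P \<equiv> exchanges T E"

lemma in_E: "a \<in> E" "b \<in> E" "c \<in> E"
  using E_eq by auto

lemma E_minus: "E - {a} = {b, c}" "E - {b} = {a, c}" "E - {c} = {a, b}"
  using E_eq distinct_abc by auto

lemma link_member: "e \<in> G u \<Longrightarrow> insert u e \<in> T"
  and link_disjoint: "e \<in> G u \<Longrightarrow> e \<inter> E = {}"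
  and exchange_member: "w \<in> P u \<Longrightarrow> insert w (E - {u}) \<in> T"
  and exchange_notin: "w \<in> P u \<Longrightarrow> w \<notin> E"
  by (simp_all add: private_link_def exchanges_def)

lemma card_link_edge:
  assumes "u \<in> E" "e \<in> G u"
  shows "card e = 2"
proof -
  have "u \<notin> e" using assms link_disjoint by blast
  moreover have "insert u e \<in> T" using assms(2) by (rule link_member)
  ultimately show ?thesis
    using card_member finite_member by fastforce
qed

lemma finite_link_edge: "u \<in> E \<Longrightarrow> e \<in> G u \<Longrightarrow> finite e"
  using card_link_edge by (metis card.infinite zero_neq_numeral)

lemma finite_link: "finite (G u)"
  using link_member by (intro finite_subset[OF _ finite_Pow_iff[THEN iffD2, OF finite_vertices]]) blast

lemma finite_exchanges: "finite (P u)"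
  using exchange_member by (intro finite_subset[OF _ finite_vertices]) blast

lemma member_in_link:
  assumes "F \<in> T" "F \<inter> E = {u}"
  shows "F - {u} \<in> G u" "F = insert u (F - {u})"
proof -
  have "u \<in> F" using assms(2) by blast
  then show "F = insert u (F - {u})" by blast
  with assms show "F - {u} \<in> G u" by (auto simp: private_link_def)
qed

lemma member_in_exchange:
  assumes "F \<in> T" "u \<in> E" "u \<notin> F" "E - {u} \<subseteq> F"
  shows "\<exists>w\<in>P u. F = insert w (E - {u})"
proof -
  have "card (E - {u}) = 2"
    using assms(2) card_member[OF edge] finite_member[OF edge] by simp
  then have "\<not> F \<subseteq> E - {u}"
    using card_member[OF assms(1)] card_mono[of "E - {u}" F] finite_member[OF edge] by auto
  then obtain w where w: "w \<in> F" "w \<notin> E" using assms(3) by blast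
  have "insert w (E - {u}) \<subseteq> F" using w assms(4) by blast
  moreover have "card (insert w (E - {u})) = card F"
    using w(2) \<open>card (E - {u}) = 2\<close> card_member[OF assms(1)] finite_member[OF edge] by simp
  ultimately have "F = insert w (E - {u})"
    using card_subset_eq[OF finite_member[OF assms(1)]] by blast
  with w assms(1) show ?thesis by (auto simp: exchanges_def)
qed

lemma in_E_iff: "u \<in> E \<longleftrightarrow> u = a \<or> u = b \<or> u = c"
  using E_eq by blast

lemma member_cases:
  assumes "F \<in> T"
  obtains (base) "F = E"
    | (link) u e where "u \<in> E" "e \<in> G u" "F = insert u e"
    | (exchange) u w where "u \<in> E" "w \<in> P u" "F = insert w (E - {u})"
proof -
  have "F \<inter> E \<noteq> {}" using members_meet[OF assms edge] .
  then have "E \<subseteq> F \<or> (\<exists>u\<in>E. u \<notin> F \<and> E - {u} \<subseteq> F) \<or> (\<exists>u\<in>E. F \<inter> E = {u})"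
    unfolding E_eq by auto
  then show thesis
  proof (elim disjE bexE conjE)
    assume "E \<subseteq> F"
    then have "E = F"
      using card_subset_eq[OF finite_member[OF assms]] card_member[OF assms] card_member[OF edge]
      by simp
    then show thesis by (intro base) simp
  next
    fix u assume "u \<in> E" "u \<notin> F" "E - {u} \<subseteq> F"
    then show thesis using member_in_exchange[OF assms] exchange by blast
  next
    fix u assume "u \<in> E" "F \<inter> E = {u}"
    then show thesis using member_in_link[OF assms] link by blast
  qed
qed

lemma links_meet:
  assumes "u \<in> E" "v \<in> E" "u \<noteq> v" "e \<in> G u" "f \<in> G v"
  shows "e \<inter> f \<noteq> {}"
proof -
  have "insert u e \<inter> insert v f \<noteq> {}"
    by (rule members_meet[OF link_member[OF assms(4)] link_member[OF assms(5)]])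
  moreover have "u \<notin> f" "v \<notin> e" using link_disjoint assms by blast+
  ultimately show ?thesis using assms(3) by blast
qed

lemma exchange_in_link_edge:
  assumes "u \<in> E" "w \<in> P u" "e \<in> G u"
  shows "w \<in> e"
proof -
  have "insert w (E - {u}) \<inter> insert u e \<noteq> {}"
    by (rule members_meet[OF exchange_member[OF assms(2)] link_member[OF assms(3)]])
  moreover have "(E - {u}) \<inter> e = {}" "w \<noteq> u"
    using link_disjoint[OF assms(3)] exchange_notin[OF assms(2)] assms(1) by auto
  ultimately show ?thesis by blast
qed

lemma avoiding_subset:
  "avoiding T a \<subseteq> insert b ` G b \<union> insert c ` G c \<union> (\<lambda>w. insert w (E - {a})) ` P a"
proof
  fix F assume "F \<in> avoiding T a"
  then have F: "F \<in> T" "a \<notin> F" by (auto simp: avoiding_def)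
  from F(1) show "F \<in> insert b ` G b \<union> insert c ` G c \<union> (\<lambda>w. insert w (E - {a})) ` P a"
  proof (cases rule: member_cases)
    case base
    with F(2) in_E show ?thesis by blast
  next
    case (link u e)
    with F(2) have "u = b \<or> u = c" using in_E_iff[of u] by auto
    with link show ?thesis by blast
  next
    case (exchange u w)
    with F(2) in_E have "u = a" by blast
    with exchange show ?thesis by blast
  qed
qed

lemma card_avoiding_le: "card (avoiding T a) \<le> card (G b) + card (G c) + card (P a)"
proof -
  have "card (avoiding T a)
      \<le> card (insert b ` G b \<union> insert c ` G c \<union> (\<lambda>w. insert w (E - {a})) ` P a)"
    using avoiding_subset finite_link finite_exchanges by (intro card_mono) auto
  also have "\<dots> \<le> card (insert b ` G b) + card (insert c ` G c) + card ((\<lambda>w. insert w (E - {a})) ` P a)"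
    using card_Un_le[of "insert b ` G b \<union> insert c ` G c" "(\<lambda>w. insert w (E - {a})) ` P a"]
      card_Un_le[of "insert b ` G b" "insert c ` G c"] by linarith
  also have "\<dots> \<le> card (G b) + card (G c) + card (P a)"
    by (intro add_mono card_image_le finite_link finite_exchanges)
  finally show ?thesis .
qed

lemma link_nonempty: "G a \<noteq> {}"
proof -
  obtain A where A: "A \<in> T" "b \<notin> A" "c \<notin> A" using pair_avoided by blast
  then show ?thesis
  proof (cases rule: member_cases)
    case (link u e)
    with A(2,3) in_E_iff have "u = a" by blast
    with link show ?thesis by blast
  next
    case (exchange u w)
    with A(2,3) in_E_iff distinct_abc show ?thesis by blast
  qed (use A in_E in blast)
qed

lemma link_no_star:
  assumes u: "u \<in> E" and sub: "{e1, e2, e3} \<subseteq> G u"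
    and distinct: "e1 \<noteq> e2" "e1 \<noteq> e3" "e2 \<noteq> e3" and centre: "p \<in> e1" "p \<in> e2" "p \<in> e3"
  shows False
proof -
  have e: "e1 \<in> G u" "e2 \<in> G u" "e3 \<in> G u" using sub by auto
  obtain q1 q2 q3 where q: "e1 = {p, q1}" "e2 = {p, q2}" "e3 = {p, q3}"
    using card_2_obtain_other[OF card_link_edge[OF u e(1)] centre(1)]
      card_2_obtain_other[OF card_link_edge[OF u e(2)] centre(2)]
      card_2_obtain_other[OF card_link_edge[OF u e(3)] centre(3)] by metis
  with distinct have q_distinct: "q1 \<noteq> q2" "q1 \<noteq> q3" "q2 \<noteq> q3" by auto
  obtain A where A: "A \<in> T" "u \<notin> A" "p \<notin> A" using pair_avoided by blast
  from A(1) show False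
  proof (cases rule: member_cases)
    case (link v g)
    with A(2) have "g \<inter> e1 \<noteq> {}" "g \<inter> e2 \<noteq> {}" "g \<inter> e3 \<noteq> {}"
      using links_meet[OF link(1) u] e by auto
    then have "p \<in> g"
      unfolding q by (rule pair_meeting_star_contains_centre[OF card_link_edge[OF link(1,2)] q_distinct])
    with link A(3) show False by blast
  next
    case (exchange v w)
    with A(2) u have "v = u" by blast
    with exchange have "w \<in> e1" "w \<in> e2" using exchange_in_link_edge e by blast+
    with q q_distinct have "w = p" by auto
    with exchange A(3) show False by blast
  qed (use A u in blast)
qed

lemma card_exchanges_add_link_le_3:
  assumes u: "u \<in> E" and nonempty: "G u \<noteq> {}" and "card (G u) \<le> 2"
  shows "card (P u) + card (G u) \<le> 3"
proof -
  obtain e where e: "e \<in> G u" using nonempty by blast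
  have "P u \<subseteq> e" using exchange_in_link_edge[OF u _ e] by blast
  then have "card (P u) \<le> card e" by (rule card_mono[OF finite_link_edge[OF u e]])
  then have "card (P u) \<le> 2" using card_link_edge[OF u e] by simp
  moreover have "card (P u) \<le> 1" if two: "card (G u) = 2"
  proof -
    obtain e1 e2 where e12: "G u = {e1, e2}" "e1 \<noteq> e2" using card_2_iff[THEN iffD1, OF two] by metis
    have e1: "e1 \<in> G u" and e2: "e2 \<in> G u" using e12 by auto
    have "P u \<subseteq> e1 \<inter> e2" using exchange_in_link_edge[OF u] e1 e2 by blast
    then have "card (P u) \<le> card (e1 \<inter> e2)"
      using finite_link_edge[OF u e1] by (intro card_mono) auto
    also have "\<dots> \<le> 1"
      by (rule card_Int_le_1_if_card_2[OF card_link_edge[OF u e1] card_link_edge[OF u e2] e12(2)])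
    finally show ?thesis .
  qed
  moreover have "card (G u) \<noteq> 0" using nonempty finite_link by simp
  ultimately show ?thesis using assms(3) by linarith
qed

lemma link_cherry:
  assumes u: "u \<in> E" and "card (G u) = 2" "P u = {w}"
  obtains r1 r2 where "G u = {{w, r1}, {w, r2}}" "r1 \<noteq> r2"
proof -
  obtain e1 e2 where e12: "G u = {e1, e2}" "e1 \<noteq> e2" using card_2_iff[THEN iffD1, OF assms(2)] by metis
  then have e1: "e1 \<in> G u" and e2: "e2 \<in> G u" by auto
  obtain r1 where "e1 = {w, r1}"
    using card_2_obtain_other[OF card_link_edge[OF u e1] exchange_in_link_edge[OF u _ e1]] assms(3)
    by blast
  moreover obtain r2 where "e2 = {w, r2}"
    using card_2_obtain_other[OF card_link_edge[OF u e2] exchange_in_link_edge[OF u _ e2]] assms(3)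
    by blast
  ultimately show thesis using e12 by (intro that) auto
qed

lemma mem_Union_if_link_edge: "e \<in> G u \<Longrightarrow> x \<in> e \<Longrightarrow> x \<in> \<Union>T"
  using link_member by blast

lemma family_eq:
  "T = insert E (insert a ` G a \<union> insert b ` G b \<union> insert c ` G c \<union>
    (\<lambda>w. {w, b, c}) ` P a \<union> (\<lambda>w. {w, a, c}) ` P b \<union> (\<lambda>w. {w, a, b}) ` P c)"
  (is "T = ?R")
proof
  show "T \<subseteq> ?R"
  proof
    fix F assume "F \<in> T"
    then show "F \<in> ?R"
    proof (cases rule: member_cases)
      case (link u e)
      from link(1) consider "u = a" | "u = b" | "u = c" using in_E_iff by blast
      then show ?thesis using link(2) unfolding link(3) by cases blast+
    next
      case (exchange u w)
      from exchange(1) consider "u = a" | "u = b" | "u = c" using in_E_iff by blast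
      then show ?thesis using exchange(2) unfolding exchange(3) by cases (simp_all add: E_minus)
    qed simp
  qed
  have "{w, b, c} \<in> T" if "w \<in> P a" for w using exchange_member[OF that] E_minus(1) by simp
  moreover have "{w, a, c} \<in> T" if "w \<in> P b" for w using exchange_member[OF that] E_minus(2) by simp
  moreover have "{w, a, b} \<in> T" if "w \<in> P c" for w using exchange_member[OF that] E_minus(3) by simp
  ultimately show "?R \<subseteq> T"
    unfolding insert_subset by (intro conjI edge Un_least image_subsetI) (simp_all add: link_member)
qed

lemma tau3_edge_perm:
  "tau3_edge T E b a c" "tau3_edge T E a c b" "tau3_edge T E c a b"
proof -
  have E_perm: "E = {b, a, c}" "E = {a, c, b}" "E = {c, a, b}"
    using E_eq by auto
  note edge_intro = tau3_edge.intro[OF tau3_triple_system_axioms tau3_edge_axioms.intro[OF edge]]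
  show "tau3_edge T E b a c" "tau3_edge T E a c b" "tau3_edge T E c a b"
    using distinct_abc by (intro edge_intro E_perm; simp)+
qed

lemma card_links_add_le_4_if_disjoint:
  assumes e: "e \<in> G a" and f: "f \<in> G a" and ef: "e \<inter> f = {}"
  shows "card (G b) + card (G c) \<le> 4"
proof -
  obtain p q where pq: "e = {p, q}" "p \<noteq> q"
    using card_2_iff[THEN iffD1, OF card_link_edge[OF in_E(1) e]] by metis
  obtain r s where rs: "f = {r, s}" "r \<noteq> s"
    using card_2_iff[THEN iffD1, OF card_link_edge[OF in_E(1) f]] by metis
  have d: "p \<noteq> r" "p \<noteq> s" "q \<noteq> r" "q \<noteq> s" using ef pq rs by auto
  define K where "K = {{p, r}, {p, s}, {q, r}, {q, s}}"
  define U where "U = {p, q, r, s}"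
  have in_K: "g \<in> K" if "u \<in> E" "u \<noteq> a" "g \<in> G u" for u g
  proof -
    have "g \<inter> e \<noteq> {}" "g \<inter> f \<noteq> {}"
      using links_meet[OF that(1) in_E(1) that(2,3)] e f by auto
    then show ?thesis
      using pair_meeting_disjoint_pairs[OF card_link_edge[OF that(1,3)] _ _ ef]
      unfolding K_def pq rs by auto
  qed
  \<comment> \<open>U - g swaps complementary cross pairs, and G b, G c never contain a complementary couple\<close>
  have "card (G b) + card (G c) \<le> card K"
  proof (rule card_add_le_by_injection[where h = "\<lambda>g. U - g"])
    show "finite K" "G c \<subseteq> K" using in_K[OF in_E(3) distinct_abc(2)[symmetric]] by (auto simp: K_def)
    have "G b \<subseteq> K" using in_K[OF in_E(2) distinct_abc(1)[symmetric]] by blast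
    moreover have "K \<subseteq> Pow U" unfolding K_def U_def by auto
    ultimately show "inj_on (\<lambda>g. U - g) (G b)"
      by (intro inj_onI) blast
    have "(\<lambda>g. U - g) ` K \<subseteq> K"
      using d pq rs unfolding K_def U_def by auto
    with \<open>G b \<subseteq> K\<close> show "(\<lambda>g. U - g) ` G b \<subseteq> K" by blast
    show "U - g \<notin> G c" if "g \<in> G b" for g
      using links_meet[OF in_E(2,3) distinct_abc(3) that] by blast
  qed
  also have "card K \<le> 4"
    unfolding K_def using card_length[of "[{p, r}, {p, s}, {q, r}, {q, s}]"] by simp
  finally show ?thesis .
qed

lemma exchanges_in_common_vertex:
  assumes u: "u \<in> E" and g: "g1 \<in> G u" "g2 \<in> G u" "g1 \<noteq> g2" "g1 \<inter> g2 \<noteq> {}"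
  obtains y where "g1 \<inter> g2 = {y}" "P u \<subseteq> {y}"
proof -
  have "card (g1 \<inter> g2) \<le> 1"
    using card_Int_le_1_if_card_2 card_link_edge[OF u] g(1-3) by blast
  moreover have "finite (g1 \<inter> g2)" using finite_link_edge[OF u g(1)] by blast
  ultimately have "card (g1 \<inter> g2) = 1" using g(4) by (simp add: le_eq_less_or_eq card_gt_0_iff)
  then obtain y where y: "g1 \<inter> g2 = {y}" by (auto simp: card_1_singleton_iff)
  moreover have "P u \<subseteq> {y}" using exchange_in_link_edge[OF u] g y by blast
  ultimately show thesis by (rule that)
qed

text \<open>(\<lambda>v. V - {v}) ` V is the triangle on a three-element set V.\<close>

lemma avoiding_le_4_if_links_in_triangle:
  assumes V: "card V = 3" "y \<in> V"
    and links: "\<And>u. u \<in> E \<Longrightarrow> G u \<subseteq> (\<lambda>v. V - {v}) ` V"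
    and exchanges: "\<And>u. u \<in> E \<Longrightarrow> P u \<subseteq> {y}"
  shows "card (avoiding T y) \<le> 4"
proof -
  have "avoiding T y \<subseteq> insert E ((\<lambda>u. insert u (V - {y})) ` E)"
  proof
    fix F assume "F \<in> avoiding T y"
    then have F: "F \<in> T" "y \<notin> F" by (auto simp: avoiding_def)
    from F(1) show "F \<in> insert E ((\<lambda>u. insert u (V - {y})) ` E)"
    proof (cases rule: member_cases)
      case (link u e)
      then obtain v where v: "v \<in> V" "e = V - {v}" using links by blast
      with link(3) F(2) V(2) have "v = y" by blast
      with link v show ?thesis by blast
    next
      case (exchange u w)
      with exchanges F(2) show ?thesis by blast
    qed simp
  qed
  then have "card (avoiding T y) \<le> card (insert E ((\<lambda>u. insert u (V - {y})) ` E))"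
    using finite_member[OF edge] by (intro card_mono) auto
  also have "\<dots> \<le> Suc (card ((\<lambda>u. insert u (V - {y})) ` E))" by (rule card_insert_le_Suc)
  also have "\<dots> \<le> Suc (card E)" using card_image_le[OF finite_member[OF edge]] by simp
  finally show ?thesis using card_member[OF edge] by simp
qed

lemma exchanges_empty_if_triangle_in_link:
  assumes "u \<in> E" "p \<noteq> q" "q \<noteq> r" "p \<noteq> r" "{{p, q}, {q, r}, {p, r}} \<subseteq> G u"
  shows "P u = {}"
proof -
  have "w \<in> {p, q}" "w \<in> {q, r}" "w \<in> {p, r}" if "w \<in> P u" for w
    using exchange_in_link_edge[OF assms(1) that] assms(5) by auto
  with assms(2-4) show ?thesis by blast
qed

lemma link_eq_if_exchanges_singletons:
  assumes P: "P a = {wa}" "P b = {wb}" "P c = {wc}" and d: "wa \<noteq> wb" "wa \<noteq> wc" "wb \<noteq> wc"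
    and G: "card (G a) = 2" "card (G b) = 2" "card (G c) = 2"
  shows "G a = {{wa, wb}, {wa, wc}}"
proof -
  obtain r1 r2 where r: "G a = {{wa, r1}, {wa, r2}}" "r1 \<noteq> r2"
    using link_cherry[OF in_E(1) G(1) P(1)] .
  obtain s1 s2 where s: "G b = {{wb, s1}, {wb, s2}}" "s1 \<noteq> s2"
    using link_cherry[OF in_E(2) G(2) P(2)] .
  obtain t1 t2 where t: "G c = {{wc, t1}, {wc, t2}}" "t1 \<noteq> t2"
    using link_cherry[OF in_E(3) G(3) P(3)] .
  have "wb = r1 \<or> wb = r2"
    by (rule cherries_meeting[OF d(1) r(2) s(2)];
        rule links_meet[OF in_E(1,2) distinct_abc(1)]; simp add: r(1) s(1))
  moreover have "wc = r1 \<or> wc = r2"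
    by (rule cherries_meeting[OF d(2) r(2) t(2)];
        rule links_meet[OF in_E(1,3) distinct_abc(2)]; simp add: r(1) t(1))
  ultimately have "{r1, r2} = {wb, wc}" using d r(2) by auto
  then show ?thesis using r(1) by (auto simp: doubleton_eq_iff)
qed

end

locale gamma5_edge = tau3_edge +
  assumes avoiding_ge_5: "v \<in> \<Union>T \<Longrightarrow> 5 \<le> card (avoiding T v)"
begin

lemma gamma5_edge_perm:
  "gamma5_edge T E b a c" "gamma5_edge T E a c b" "gamma5_edge T E c a b"
  using tau3_edge_perm gamma5_edge_axioms by (simp_all add: gamma5_edge_def)

lemma link_edges_meet:
  assumes e: "e \<in> G a" and f: "f \<in> G a"
  shows "e \<inter> f \<noteq> {}"
proof
  assume ef: "e \<inter> f = {}"
  then have "P a = {}"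
    using exchange_in_link_edge[OF in_E(1) _ e] exchange_in_link_edge[OF in_E(1) _ f] by blast
  moreover have "5 \<le> card (avoiding T a)"
    using avoiding_ge_5 edge in_E(1) by blast
  ultimately show False
    using card_avoiding_le card_links_add_le_4_if_disjoint[OF e f ef] by simp
qed

lemma triangle_links_impossible:
  assumes d: "p \<noteq> q" "q \<noteq> r" "p \<noteq> r" and D: "D = {{p, q}, {q, r}, {p, r}}"
    and Ga: "D \<subseteq> G a" and Gb: "G b = D" and Gc: "G c \<subseteq> D" "2 \<le> card (G c)"
  shows False
proof -
  have meet_triangle: "g \<in> D" if "card g = 2" "\<And>h. h \<in> D \<Longrightarrow> g \<inter> h \<noteq> {}" for g
    unfolding D by (rule pair_meeting_triangle[OF that(1) d]; rule that(2); simp add: D)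
  have "G a \<subseteq> D"
  proof
    fix g assume g: "g \<in> G a"
    show "g \<in> D"
      by (rule meet_triangle[OF card_link_edge[OF in_E(1) g]])
        (use links_meet[OF in_E(1,2) distinct_abc(1) g] in \<open>simp add: Gb\<close>)
  qed
  have "P a = {}" "P b = {}"
    using exchanges_empty_if_triangle_in_link[OF in_E(1) d] exchanges_empty_if_triangle_in_link[OF in_E(2) d]
      Ga Gb D by simp_all
  obtain g1 g2 where g: "g1 \<in> G c" "g2 \<in> G c" "g1 \<noteq> g2"
    using Gc(2) by (rule card_ge_2_obtain)
  moreover have "g1 \<inter> g2 \<noteq> {}" using g Gc(1) D by auto
  ultimately obtain y where y: "g1 \<inter> g2 = {y}" and "P c \<subseteq> {y}"
    by (rule exchanges_in_common_vertex[OF in_E(3)])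
  have "y \<in> g1" "g1 \<subseteq> {p, q, r}" using y g(1) Gc(1) D by auto
  then have V: "card {p, q, r} = 3" "y \<in> {p, q, r}" using d by auto
  have "card (avoiding T y) \<le> 4"
  proof (rule avoiding_le_4_if_links_in_triangle[OF V])
    fix u assume "u \<in> E"
    then consider "u = a" | "u = b" | "u = c" using in_E_iff by blast
    then have "G u \<subseteq> D" "P u \<subseteq> {y}"
      using \<open>G a \<subseteq> D\<close> Gb Gc(1) \<open>P a = {}\<close> \<open>P b = {}\<close> \<open>P c \<subseteq> {y}\<close> by (cases; simp)+
    then show "G u \<subseteq> (\<lambda>v. {p, q, r} - {v}) ` {p, q, r}" "P u \<subseteq> {y}"
      unfolding D triangle_eq_image[OF d] by simp_all
  qed
  moreover have "y \<in> \<Union>T" using y g(1) mem_Union_if_link_edge by blast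
  ultimately show False using avoiding_ge_5 by fastforce
qed

lemma link_no_triangle:
  assumes d: "p \<noteq> q" "q \<noteq> r" "p \<noteq> r" and sub: "{{p, q}, {q, r}, {p, r}} \<subseteq> G a"
  shows False
proof -
  interpret acb: gamma5_edge T E a c b by (rule gamma5_edge_perm(2))
  define D where "D = {{p, q}, {q, r}, {p, r}}"
  have in_D: "G u \<subseteq> D" if "u \<in> E" "u \<noteq> a" for u
  proof
    fix g assume g: "g \<in> G u"
    have "g \<inter> h \<noteq> {}" if "h \<in> D" for h
      using links_meet[OF \<open>u \<in> E\<close> in_E(1) \<open>u \<noteq> a\<close> g] sub that unfolding D_def by blast
    then show "g \<in> D"
      using pair_meeting_triangle[OF card_link_edge[OF \<open>u \<in> E\<close> g] d] unfolding D_def by blast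
  qed
  have Gb: "G b \<subseteq> D" and Gc: "G c \<subseteq> D"
    using in_D in_E distinct_abc by auto
  have "P a = {}" by (rule exchanges_empty_if_triangle_in_link[OF in_E(1) d sub])
  moreover have "5 \<le> card (avoiding T a)"
    using avoiding_ge_5 edge in_E(1) by blast
  ultimately have "5 \<le> card (G b) + card (G c)" using card_avoiding_le by simp
  moreover have "finite D" "card D \<le> 3"
    unfolding D_def using card_length[of "[{p, q}, {q, r}, {p, r}]"] by auto
  moreover have "card (G b) \<le> card D" "card (G c) \<le> card D"
    using card_mono[OF \<open>finite D\<close>] Gb Gc by auto
  ultimately consider "card (G b) = card D" "2 \<le> card (G c)" | "card (G c) = card D" "2 \<le> card (G b)"
    by linarith
  then show False
  proof cases
    case 1
    then have "G b = D" using card_subset_eq[OF \<open>finite D\<close> Gb] by blast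
    then show False
      using triangle_links_impossible[OF d D_def _ _ Gc 1(2)] sub D_def by blast
  next
    case 2
    then have "G c = D" using card_subset_eq[OF \<open>finite D\<close> Gc] by blast
    then show False
      using acb.triangle_links_impossible[OF d D_def _ _ Gb 2(2)] sub D_def by blast
  qed
qed

lemma card_link_le_2: "card (G a) \<le> 2"
  using card_link_edge[OF in_E(1)] link_edges_meet link_no_star[OF in_E(1)] link_no_triangle
  by (rule card_le_2_if_no_star_no_triangle)

lemma card_link_and_exchanges: "card (G a) = 2" "card (P a) = 1"
proof -
  interpret bac: gamma5_edge T E b a c by (rule gamma5_edge_perm(1))
  interpret cab: gamma5_edge T E c a b by (rule gamma5_edge_perm(3))
  have "a \<in> \<Union>T" "b \<in> \<Union>T" "c \<in> \<Union>T" using edge in_E by blast+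
  then have "5 \<le> card (avoiding T a)" "5 \<le> card (avoiding T b)" "5 \<le> card (avoiding T c)"
    using avoiding_ge_5 by blast+
  moreover note card_avoiding_le bac.card_avoiding_le cab.card_avoiding_le
  moreover note card_link_le_2 bac.card_link_le_2 cab.card_link_le_2
  moreover note
    card_exchanges_add_link_le_3[OF in_E(1) link_nonempty card_link_le_2]
    card_exchanges_add_link_le_3[OF in_E(2) bac.link_nonempty bac.card_link_le_2]
    card_exchanges_add_link_le_3[OF in_E(3) cab.link_nonempty cab.card_link_le_2]
  ultimately show "card (G a) = 2" "card (P a) = 1" by linarith+
qed

lemma exchange_vertices_differ:
  assumes "P a = {w}" "P c = {w}"
  shows False
proof -
  interpret bac: gamma5_edge T E b a c by (rule gamma5_edge_perm(1))
  have "avoiding T w \<subseteq> insert E (insert b ` G b \<union> (\<lambda>x. insert x (E - {b})) ` P b)"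
  proof
    fix F assume "F \<in> avoiding T w"
    then have F: "F \<in> T" "w \<notin> F" by (auto simp: avoiding_def)
    from F(1) show "F \<in> insert E (insert b ` G b \<union> (\<lambda>x. insert x (E - {b})) ` P b)"
    proof (cases rule: member_cases)
      case (link u e)
      with F(2) assms exchange_in_link_edge have "u \<noteq> a" "u \<noteq> c" by blast+
      with link in_E_iff show ?thesis by blast
    next
      case (exchange u w')
      with F(2) assms have "u \<noteq> a" "u \<noteq> c" by auto
      with exchange in_E_iff show ?thesis by blast
    qed simp
  qed
  then have "card (avoiding T w)
      \<le> card (insert E (insert b ` G b \<union> (\<lambda>x. insert x (E - {b})) ` P b))"
    using finite_link finite_exchanges by (intro card_mono) auto
  also have "\<dots> \<le> Suc (card (insert b ` G b \<union> (\<lambda>x. insert x (E - {b})) ` P b))"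
    by (rule card_insert_le_Suc)
  also have "\<dots> \<le> Suc (card (insert b ` G b) + card ((\<lambda>x. insert x (E - {b})) ` P b))"
    using card_Un_le by simp
  also have "\<dots> \<le> Suc (card (G b) + card (P b))"
    using add_mono[OF card_image_le[OF finite_link] card_image_le[OF finite_exchanges]] by simp
  finally have "card (avoiding T w) \<le> 4"
    using bac.card_link_and_exchanges by simp
  moreover obtain e where "e \<in> G a" using link_nonempty by blast
  then have "w \<in> \<Union>T"
    using exchange_in_link_edge[OF in_E(1)] assms(1) mem_Union_if_link_edge by blast
  ultimately show False using avoiding_ge_5 by fastforce
qed

lemma exchanges_and_links:
  obtains wa wb wc where "distinct [a, b, c, wa, wb, wc]"
    "P a = {wa}" "P b = {wb}" "P c = {wc}"
    "G a = {{wa, wb}, {wa, wc}}" "G b = {{wb, wa}, {wb, wc}}" "G c = {{wc, wa}, {wc, wb}}"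
proof -
  interpret bac: gamma5_edge T E b a c by (rule gamma5_edge_perm(1))
  interpret acb: gamma5_edge T E a c b by (rule gamma5_edge_perm(2))
  interpret cab: gamma5_edge T E c a b by (rule gamma5_edge_perm(3))
  obtain wa where Pa: "P a = {wa}"
    using card_link_and_exchanges(2) by (auto simp: card_1_singleton_iff)
  obtain wb where Pb: "P b = {wb}"
    using bac.card_link_and_exchanges(2) by (auto simp: card_1_singleton_iff)
  obtain wc where Pc: "P c = {wc}"
    using cab.card_link_and_exchanges(2) by (auto simp: card_1_singleton_iff)
  note P = Pa Pb Pc
  have d: "wa \<noteq> wb" "wa \<noteq> wc" "wb \<noteq> wc"
  proof -
    show "wa \<noteq> wb" using acb.exchange_vertices_differ[OF Pa] Pb by blast
    show "wa \<noteq> wc" using exchange_vertices_differ[OF Pa] Pc by blast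
    show "wb \<noteq> wc" using bac.exchange_vertices_differ[OF Pb] Pc by blast
  qed
  have G: "card (G a) = 2" "card (G b) = 2" "card (G c) = 2"
    using card_link_and_exchanges(1) bac.card_link_and_exchanges(1) cab.card_link_and_exchanges(1) .
  have "wa \<notin> E" "wb \<notin> E" "wc \<notin> E" using exchange_notin P by blast+
  then have "distinct [a, b, c, wa, wb, wc]" using distinct_abc in_E d by auto
  moreover have "G a = {{wa, wb}, {wa, wc}}"
    using link_eq_if_exchanges_singletons[OF P d G] .
  moreover have "G b = {{wb, wa}, {wb, wc}}"
    using bac.link_eq_if_exchanges_singletons[OF P(2,1,3) d(1)[symmetric] d(3,2) G(2,1,3)] .
  moreover have "G c = {{wc, wa}, {wc, wb}}"
    using cab.link_eq_if_exchanges_singletons[OF P(3,1,2) d(2)[symmetric] d(3)[symmetric] d(1)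
        G(3,1,2)] .
  ultimately show thesis using P by (intro that)
qed

lemma isomorphic_T0: "isomorphic T0 T"
proof -
  obtain wa wb wc where w: "distinct [a, b, c, wa, wb, wc]"
    "P a = {wa}" "P b = {wb}" "P c = {wc}"
    "G a = {{wa, wb}, {wa, wc}}" "G b = {{wb, wa}, {wb, wc}}" "G c = {{wc, wa}, {wc, wb}}"
    by (rule exchanges_and_links)
  have "T = insert E (insert a ` {{wa, wb}, {wa, wc}} \<union> insert b ` {{wb, wa}, {wb, wc}} \<union>
      insert c ` {{wc, wa}, {wc, wb}} \<union> (\<lambda>w. {w, b, c}) ` {wa} \<union> (\<lambda>w. {w, a, c}) ` {wb} \<union>
      (\<lambda>w. {w, a, b}) ` {wc})"
    using family_eq unfolding w(2-7) .
  \<comment> \<open>insert_commute normalises both enumerations of the ten triples to the same term\<close>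
  then show ?thesis
    using isomorphic_T0_explicit[OF w(1)] unfolding E_eq by (simp add: insert_commute)
qed

end

lemma (in tau3_triple_system) isomorphic_T0_if_avoiding_ge_5:
  assumes "\<And>v. v \<in> \<Union>T \<Longrightarrow> 5 \<le> card (avoiding T v)"
  shows "isomorphic T0 T"
proof -
  obtain E where E: "E \<in> T" using pair_avoided by blast
  then obtain a b c where "E = {a, b, c}" "a \<noteq> b" "a \<noteq> c" "b \<noteq> c"
    using card_member card_3_iff by metis
  with E assms interpret gamma5_edge T E a b c
    by unfold_locales
  show ?thesis by (rule isomorphic_T0)
qed

lemma pair_avoided_if_tau_gt_2:
  assumes "2 < tau T"
  shows "\<exists>A\<in>T. x \<notin> A \<and> y \<notin> A"
proof (rule ccontr)
  assume "\<not> (\<exists>A\<in>T. x \<notin> A \<and> y \<notin> A)"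
  then have "\<exists>S. finite S \<and> card S = card {x, y} \<and> (\<forall>A\<in>T. S \<inter> A \<noteq> {})"
    by (intro exI[of _ "{x, y}"]) auto
  then have "tau T \<le> card {x, y}" unfolding tau_def by (rule Least_le)
  also have "\<dots> \<le> 2" by (simp add: card_insert_if)
  finally show False using assms by simp
qed

lemma gamma1_le_avoiding:
  assumes "\<Union>T \<subseteq> {1..n}" "v \<in> \<Union>T"
  shows "gamma1 n T \<le> card (avoiding T v)"
  unfolding gamma1_def avoiding_def using assms by (intro Min_le) auto

lemma gamma1_eq_5_if_isomorphic_T0:
  assumes "\<Union>T \<subseteq> {1..n}" "isomorphic T0 T"
  shows "gamma1 n T = 5"
proof -
  obtain v where v: "v \<in> \<Union>T" "card (avoiding T v) = 5"
    using isomorphic_T0_avoiding(2)[OF assms(2)] by blast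
  have "5 \<le> gamma1 n T"
    unfolding gamma1_def using v(1) assms isomorphic_T0_avoiding(1)[OF assms(2)]
    by (subst Min_ge_iff) (auto simp: avoiding_def)
  moreover have "gamma1 n T \<le> 5" using gamma1_le_avoiding[OF assms(1) v(1)] v(2) by simp
  ultimately show ?thesis by simp
qed

theorem corollary3p3:
  fixes n :: nat and T :: "nat set set"
  assumes "T \<subseteq> {A. A \<subseteq> {1..n} \<and> card A = 3}"
    and "intersecting T"
    and "tau T = 3"
  shows "gamma1 n T \<le> 5 \<and> (gamma1 n T = 5 \<longleftrightarrow> isomorphic T0 T)"
proof -
  have vertices: "\<Union>T \<subseteq> {1..n}" using assms(1) by blast
  interpret tau3_triple_system T
  proof
    show "finite T" using assms(1) finite_subset[of T "Pow {1..n}"] by auto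
    show "card A = 3" if "A \<in> T" for A using assms(1) that by blast
    show "\<exists>A\<in>T. x \<notin> A \<and> y \<notin> A" for x y using pair_avoided_if_tau_gt_2[of T] assms(3) by simp
  qed fact
  show ?thesis
  proof (cases "\<forall>v\<in>\<Union>T. 5 \<le> card (avoiding T v)")
    case True
    then have "isomorphic T0 T" by (intro isomorphic_T0_if_avoiding_ge_5) blast
    with gamma1_eq_5_if_isomorphic_T0[OF vertices] show ?thesis by simp
  next
    case False
    then obtain v where "v \<in> \<Union>T" "card (avoiding T v) < 5" by (auto simp: not_le)
    with gamma1_le_avoiding[OF vertices] isomorphic_T0_avoiding(1)[of T v]
    show ?thesis by fastforce
  qed
qed

end
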